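(* Let $\mathcal{X}$ be an input set, $\mathcal{T}=\{1,\dots,T\}$ a finite set of task indices, and for each $t\in\mathcal{T}$ let $\mathcal{Y}^t$ be an output space. Fix a context data set $C$. Suppose we are given a distribution $p(z\mid C)$ on a global latent variable $z$, conditional distributions $p(v^t\mid z,t,C)$ on task-specific latent variables $v^t$ ($t\in\mathcal{T}$), and conditional distributions $p(y\mid x,t,v^t)$ on $\mathcal{Y}^t$ for $x\in\mathcal{X}$, $t\in\mathcal{T}$. Consider the generative process $$z\sim p(z\mid C),\qquad v^t\sim p(v^t\mid z,t,C)\ \ \forall t\in\mathcal{T},\qquad y_{(x_i,t)}\sim p(y_{(x_i,t)}\mid x_i,t,v^t),$$ which, for any finite sequence of inputs $X=((x_1,t_1),\dots,(x_n,t_n))$ in $\mathcal{X}\times\mathcal{T}$ and outputs $Y=(y_{(x_1,t_1)},\dots,y_{(x_n,t_n)})$, defines $$p(Y\mid X,C)=\int\!\!\int\Big(\prod_{i=1}^n p(y_{(x_i,t_i)}\mid x_i,t_i,v^{t_i})\Big)\Big(\prod_{t=1}^T p(v^t\mid z,t,C)\Big)p(z\mid C)\,dv^{1:T}\,dz .$$ Assume (i) these distributions are finite so that the order of integration may be interchanged, and (ii) the output distribution selects the task-specific latent variable by the task index, i.e. there is a distribution $\tilde p$ with $\tilde p(y_{(x,t)}\mid x,t,v^{1:T})=p(y_{(x,t)}\mid x,t,v^t)$ for all $x,t$. Then there exists a stochastic process $H:\mathcal{X}\times\mathcal{T}\times\Omega\to\bigcup_{t\in\mathcal{T}}\mathcal{Y}^t$,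 i.e. a distribution over functions $h:\mathcal{X}\times\mathcal{T}\to\bigcup_{t\in\mathcal{T}}\mathcal{Y}^t$, whose finite-dimensional distributions are the $p(Y\mid X,C)$ above, so that the data are generated by this process.
   Context: The context $C$ is a finite set of observed input-output pairs $((x_i,t),y_i^t)$ with $x_i\in\mathcal{X}$, $t\in\mathcal{T}$, $y_i^t\in\mathcal{Y}^t$. For a pair $(x,t)$, $y_{(x,t)}$ denotes the output of task $t$ at input $x$. $v^{1:T}=(v^1,\dots,v^T)$. A stochastic process here is a collection of random variables indexed by $\mathcal{X}\times\mathcal{T}$ on a common probability space $(\Omega,\mathcal{F},\mathbb{P})$, equivalently a random function $h$; its finite-dimensional distribution at inputs $X$ is the joint law of the outputs at those inputs. *)

theory Defs
  imports "HOL-Probability.Probability"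
begin

text \<open>Inputs have type 'x, global latent 'z,
task latents 'v (with task-specific measurable space V t), outputs 'y
(with task-specific output space Y t; the union of the Y t is carried by the type 'y).
The densities of the paper are generalised to Markov kernels:
  Pz          : the distribution p(z | C)
  Kv t z      : the distribution p(v^t | z, t, C)
  Ky x t w    : the distribution p(y | x, t, v^t = w).\<close>

text \<open>This is the measure-theoretic form of
the iterated integral in the paper.\<close>
definition model_fdd ::
  "nat \<Rightarrow> 'z measure \<Rightarrow> (nat \<Rightarrow> 'z \<Rightarrow> 'v measure) \<Rightarrow>
   ('x \<Rightarrow> nat \<Rightarrow> 'v \<Rightarrow> 'y measure) \<Rightarrow> ('x \<times> nat) list \<Rightarrow> (nat \<Rightarrow> 'y) measure" where
  "model_fdd T Pz Kv Ky xs =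
     Pz \<bind> (\<lambda>z. (PiM {1..T} (\<lambda>t. Kv t z)) \<bind>
       (\<lambda>v. PiM {..<length xs} (\<lambda>i. Ky (fst (xs ! i)) (snd (xs ! i)) (v (snd (xs ! i))))))"

end

theory Submission
  imports Defs
begin

text \<open>The process is the composite kernel z \<mapsto> v \<mapsto> h: draw z, then all task latents v
independently, then every value h(x, t) independently from Ky x t (v t), i.e. an infinite
product measure over all of UNIV \<times> {1..T}.  Its image under restriction to finitely many
distinct coordinates is the finite product of the corresponding factors, and taking images
commutes with the Giry monad bind; this gives exactly the iterated bind of model_fdd.\<close>

lemma prob_kernelD:
  assumes "K \<in> M \<rightarrow>\<^sub>M prob_algebra N" "a \<in> space M"
  shows "prob_space (K a)" "sets (K a) = sets N"
  using measurable_space[OF assms] by (simp_all add: space_prob_algebra)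

lemma measurable_PiM_prob_kernel:
  assumes K: "\<And>i. i \<in> I \<Longrightarrow> K i \<in> M \<rightarrow>\<^sub>M prob_algebra (N i)"
  shows "(\<lambda>a. PiM I (\<lambda>i. K i a)) \<in> M \<rightarrow>\<^sub>M prob_algebra (PiM I N)"
proof (rule measurable_prob_algebra_generated[OF sets_PiM Int_stable_prod_algebra prod_algebra_sets_into_space])
  fix a assume a: "a \<in> space M"
  then show "prob_space (PiM I (\<lambda>i. K i a))"
    by (intro prob_space_PiM prob_kernelD[OF K])
  show "sets (PiM I (\<lambda>i. K i a)) = sets (PiM I N)"
    using a by (intro sets_PiM_cong prob_kernelD[OF K]) auto
next
  fix A assume "A \<in> prod_algebra I N"
  then obtain J E where A: "A = prod_emb I N J (\<Pi>\<^sub>E j\<in>J. E j)"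
    "finite J" "J \<subseteq> I" "\<And>j. j \<in> J \<Longrightarrow> E j \<in> sets (N j)"
    by (auto elim!: prod_algebraE)
  have cylinder: "emeasure (PiM I (\<lambda>i. K i a)) A = (\<Prod>j\<in>J. emeasure (K j a) (E j))"
    if a: "a \<in> space M" for a
  proof -
    have "space (K i a) = space (N i)" if "i \<in> I" for i
      using prob_kernelD(2)[OF K[OF that] a] by (rule sets_eq_imp_space_eq)
    then have "A = prod_emb I (\<lambda>i. K i a) J (\<Pi>\<^sub>E j\<in>J. E j)"
      unfolding A(1) prod_emb_def by (auto simp: PiE_iff)
    then show ?thesis
      using A a prob_kernelD[OF K] by (simp add: emeasure_PiM_emb subset_eq)
  qed
  have "(\<lambda>a. emeasure (K j a) (E j)) \<in> borel_measurable M" if "j \<in> J" for j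
    using A that
    by (intro measurable_compose[OF measurable_prob_algebraD[OF K] measurable_emeasure_subprob_algebra]) auto
  then show "(\<lambda>a. emeasure (PiM I (\<lambda>i. K i a)) A) \<in> borel_measurable M"
    by (subst measurable_cong[OF cylinder]) (auto intro!: borel_measurable_prod_ennreal)
qed

lemma distr_bind_prob_algebra:
  assumes "M \<in> space (prob_algebra L)" "K \<in> L \<rightarrow>\<^sub>M prob_algebra N" "f \<in> N \<rightarrow>\<^sub>M R"
  shows "distr (M \<bind> K) R f = M \<bind> (\<lambda>a. distr (K a) R f)"
proof (rule distr_bind[OF _ _ assms(3)])
  have "sets M = sets L" "prob_space M"
    using assms(1) by (simp_all add: space_prob_algebra)
  then show "K \<in> M \<rightarrow>\<^sub>M subprob_algebra N" "space M \<noteq> {}"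
    using measurable_prob_algebraD[OF assms(2)]
    by (simp_all add: prob_space.not_empty cong: measurable_cong_sets)
qed

lemma distr_PiM_nth:
  assumes "\<And>i. i \<in> I \<Longrightarrow> prob_space (M i)" "distinct xs" "set xs \<subseteq> I"
    and "\<And>n. n < length xs \<Longrightarrow> sets (N n) = sets (M (xs ! n))"
  shows "distr (PiM I M) (PiM {..<length xs} N) (\<lambda>\<omega>. \<lambda>n\<in>{..<length xs}. \<omega> (xs ! n))
           = PiM {..<length xs} (\<lambda>n. M (xs ! n))"
proof -
  have "sets (PiM {..<length xs} N) = sets (PiM {..<length xs} (\<lambda>n. M (xs ! n)))"
    using assms(4) by (intro sets_PiM_cong) auto
  then have "distr (PiM I M) (PiM {..<length xs} N) (\<lambda>\<omega>. \<lambda>n\<in>{..<length xs}. \<omega> (xs ! n))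
      = distr (PiM I M) (PiM {..<length xs} (\<lambda>n. M (xs ! n))) (\<lambda>\<omega>. \<lambda>n\<in>{..<length xs}. \<omega> (xs ! n))"
    by (intro distr_cong) auto
  also have "\<dots> = PiM {..<length xs} (\<lambda>n. M (xs ! n))"
    using assms(1-3) by (intro distr_PiM_reindex) (auto simp: inj_on_nth)
  finally show ?thesis .
qed

definition latent_kernel :: "nat \<Rightarrow> (nat \<Rightarrow> 'z \<Rightarrow> 'v measure) \<Rightarrow> 'z \<Rightarrow> (nat \<Rightarrow> 'v) measure" where
  "latent_kernel T Kv z = PiM {1..T} (\<lambda>t. Kv t z)"

text \<open>Assumption (ii) of the paper is built in: the value at (x, t) only sees the latent v t.\<close>
definition output_kernel ::
  "nat \<Rightarrow> ('x \<Rightarrow> nat \<Rightarrow> 'v \<Rightarrow> 'y measure) \<Rightarrow> (nat \<Rightarrow> 'v) \<Rightarrow> ('x \<times> nat \<Rightarrow> 'y) measure" where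
  "output_kernel T Ky v = PiM (UNIV \<times> {1..T}) (\<lambda>(x, t). Ky x t (v t))"

definition model_process ::
  "nat \<Rightarrow> 'z measure \<Rightarrow> (nat \<Rightarrow> 'z \<Rightarrow> 'v measure) \<Rightarrow> ('x \<Rightarrow> nat \<Rightarrow> 'v \<Rightarrow> 'y measure) \<Rightarrow>
   ('x \<times> nat \<Rightarrow> 'y) measure" where
  "model_process T Pz Kv Ky = Pz \<bind> (\<lambda>z. latent_kernel T Kv z \<bind> output_kernel T Ky)"

lemma measurable_latent_kernel:
  assumes "\<And>t. t \<in> {1..T} \<Longrightarrow> Kv t \<in> Pz \<rightarrow>\<^sub>M prob_algebra (V t)"
  shows "latent_kernel T Kv \<in> Pz \<rightarrow>\<^sub>M prob_algebra (PiM {1..T} V)"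
  unfolding latent_kernel_def[abs_def] using assms by (rule measurable_PiM_prob_kernel)

lemma measurable_output_kernel:
  assumes Ky: "\<And>x t. t \<in> {1..T} \<Longrightarrow> Ky x t \<in> V t \<rightarrow>\<^sub>M prob_algebra (Y t)"
  shows "output_kernel T Ky \<in> PiM {1..T} V \<rightarrow>\<^sub>M prob_algebra (PiM (UNIV \<times> {1..T}) (\<lambda>(x, t). Y t))"
proof -
  have "(\<lambda>v. Ky x t (v t)) \<in> PiM {1..T} V \<rightarrow>\<^sub>M prob_algebra (Y t)" if "t \<in> {1..T}" for x t
    using that Ky by (intro measurable_compose[OF measurable_component_singleton])
  then show ?thesis
    unfolding output_kernel_def[abs_def] by (intro measurable_PiM_prob_kernel) auto
qed

lemma distr_output_kernel_nth:
  assumes Ky: "\<And>x t. t \<in> {1..T} \<Longrightarrow> Ky x t \<in> V t \<rightarrow>\<^sub>M prob_algebra (Y t)"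
    and v: "v \<in> space (PiM {1..T} V)"
    and xs: "distinct xs" "set xs \<subseteq> UNIV \<times> {1..T}"
  shows "distr (output_kernel T Ky v) (PiM {..<length xs} (\<lambda>i. Y (snd (xs ! i))))
             (\<lambda>h. \<lambda>i\<in>{..<length xs}. h (xs ! i))
           = PiM {..<length xs} (\<lambda>i. Ky (fst (xs ! i)) (snd (xs ! i)) (v (snd (xs ! i))))"
proof -
  have "v t \<in> space (V t)" if "t \<in> {1..T}" for t
    using v that by (auto simp: space_PiM)
  then have "prob_space (Ky x t (v t))" "sets (Ky x t (v t)) = sets (Y t)" if "t \<in> {1..T}" for x t
    using prob_kernelD[OF Ky] that by auto
  moreover have "snd (xs ! i) \<in> {1..T}" if "i < length xs" for i
    using xs that nth_mem by fastforce
  ultimately show ?thesis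
    unfolding output_kernel_def using xs by (subst distr_PiM_nth) (auto simp: split_beta)
qed

lemma measurable_model_kernel:
  assumes "\<And>t. t \<in> {1..T} \<Longrightarrow> Kv t \<in> Pz \<rightarrow>\<^sub>M prob_algebra (V t)"
    and "\<And>x t. t \<in> {1..T} \<Longrightarrow> Ky x t \<in> V t \<rightarrow>\<^sub>M prob_algebra (Y t)"
  shows "(\<lambda>z. latent_kernel T Kv z \<bind> output_kernel T Ky)
           \<in> Pz \<rightarrow>\<^sub>M prob_algebra (PiM (UNIV \<times> {1..T}) (\<lambda>(x, t). Y t))"
proof (rule measurable_bind_prob_space)
  show "latent_kernel T Kv \<in> Pz \<rightarrow>\<^sub>M prob_algebra (PiM {1..T} V)"
    using assms(1) by (rule measurable_latent_kernel)
  show "output_kernel T Ky \<in> PiM {1..T} V \<rightarrow>\<^sub>M prob_algebra (PiM (UNIV \<times> {1..T}) (\<lambda>(x, t). Y t))"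
    using assms(2) by (rule measurable_output_kernel)
qed

lemma model_process_in_prob_algebra:
  assumes "prob_space Pz"
    and "\<And>t. t \<in> {1..T} \<Longrightarrow> Kv t \<in> Pz \<rightarrow>\<^sub>M prob_algebra (V t)"
    and "\<And>x t. t \<in> {1..T} \<Longrightarrow> Ky x t \<in> V t \<rightarrow>\<^sub>M prob_algebra (Y t)"
  shows "model_process T Pz Kv Ky \<in> space (prob_algebra (PiM (UNIV \<times> {1..T}) (\<lambda>(x, t). Y t)))"
proof -
  have Pz: "Pz \<in> space (prob_algebra Pz)"
    using assms(1) by (simp add: space_prob_algebra)
  have K: "(\<lambda>z. latent_kernel T Kv z \<bind> output_kernel T Ky)
      \<in> Pz \<rightarrow>\<^sub>M prob_algebra (PiM (UNIV \<times> {1..T}) (\<lambda>(x, t). Y t))"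
    using assms(2,3) by (rule measurable_model_kernel)
  show ?thesis
    unfolding model_process_def space_prob_algebra
    using prob_space_bind'[OF Pz K] sets_bind'[OF Pz K] by simp
qed

lemma distr_model_process_nth:
  assumes "prob_space Pz"
    and Kv: "\<And>t. t \<in> {1..T} \<Longrightarrow> Kv t \<in> Pz \<rightarrow>\<^sub>M prob_algebra (V t)"
    and Ky: "\<And>x t. t \<in> {1..T} \<Longrightarrow> Ky x t \<in> V t \<rightarrow>\<^sub>M prob_algebra (Y t)"
    and xs: "distinct xs" "set xs \<subseteq> UNIV \<times> {1..T}"
  shows "distr (model_process T Pz Kv Ky) (PiM {..<length xs} (\<lambda>i. Y (snd (xs ! i))))
             (\<lambda>h. \<lambda>i\<in>{..<length xs}. h (xs ! i))
           = model_fdd T Pz Kv Ky xs" (is "distr _ ?R ?f = _")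
proof -
  have latent: "latent_kernel T Kv \<in> Pz \<rightarrow>\<^sub>M prob_algebra (PiM {1..T} V)"
    using Kv by (rule measurable_latent_kernel)
  have outputs:
    "output_kernel T Ky \<in> PiM {1..T} V \<rightarrow>\<^sub>M prob_algebra (PiM (UNIV \<times> {1..T}) (\<lambda>(x, t). Y t))"
    using Ky by (rule measurable_output_kernel)
  have K: "(\<lambda>z. latent_kernel T Kv z \<bind> output_kernel T Ky)
      \<in> Pz \<rightarrow>\<^sub>M prob_algebra (PiM (UNIV \<times> {1..T}) (\<lambda>(x, t). Y t))"
    using Kv Ky by (rule measurable_model_kernel)
  have Pz: "Pz \<in> space (prob_algebra Pz)"
    using assms(1) by (simp add: space_prob_algebra)
  have f: "?f \<in> PiM (UNIV \<times> {1..T}) (\<lambda>(x, t). Y t) \<rightarrow>\<^sub>M ?R"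
    using xs nth_mem measurable_component_singleton[of "xs ! _" "UNIV \<times> {1..T}" "\<lambda>(x, t). Y t"]
    by (intro measurable_restrict) (auto simp: split_beta subset_eq)
  have "distr (model_process T Pz Kv Ky) ?R ?f
      = Pz \<bind> (\<lambda>z. distr (latent_kernel T Kv z \<bind> output_kernel T Ky) ?R ?f)"
    unfolding model_process_def
    using Pz K f by (rule distr_bind_prob_algebra)
  also have "\<dots> = Pz \<bind> (\<lambda>z. latent_kernel T Kv z \<bind> (\<lambda>v. distr (output_kernel T Ky v) ?R ?f))"
    using measurable_space[OF latent] outputs f
    by (intro bind_cong refl distr_bind_prob_algebra)
  also have "\<dots> = model_fdd T Pz Kv Ky xs"
    unfolding model_fdd_def
  proof (intro bind_cong refl)
    fix z v assume "z \<in> space Pz" "v \<in> space (latent_kernel T Kv z)"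
    then have "v \<in> space (PiM {1..T} V)"
      using sets_eq_imp_space_eq[OF prob_kernelD(2)[OF latent]] by blast
    from Ky this xs show "distr (output_kernel T Ky v) ?R ?f
        = PiM {..<length xs} (\<lambda>i. Ky (fst (xs ! i)) (snd (xs ! i)) (v (snd (xs ! i))))"
      by (rule distr_output_kernel_nth)
  qed (simp add: latent_kernel_def)
  finally show ?thesis .
qed

theorem proposition1:
  fixes T :: nat
    and Pz :: "'z measure"
    and V :: "nat \<Rightarrow> 'v measure"
    and Y :: "nat \<Rightarrow> 'y measure"
    and Kv :: "nat \<Rightarrow> 'z \<Rightarrow> 'v measure"
    and Ky :: "'x \<Rightarrow> nat \<Rightarrow> 'v \<Rightarrow> 'y measure"
  assumes "prob_space Pz"
    and "\<forall>t\<in>{1..T}. Kv t \<in> Pz \<rightarrow>\<^sub>M prob_algebra (V t)"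
    and "\<forall>x. \<forall>t\<in>{1..T}. Ky x t \<in> V t \<rightarrow>\<^sub>M prob_algebra (Y t)"
  shows "\<exists>P :: ('x \<times> nat \<Rightarrow> 'y) measure.
           prob_space P \<and>
           sets P = sets (PiM (UNIV \<times> {1..T}) (\<lambda>(x, t). Y t)) \<and>
           (\<forall>xs. distinct xs \<longrightarrow> set xs \<subseteq> UNIV \<times> {1..T} \<longrightarrow>
              distr P (PiM {..<length xs} (\<lambda>i. Y (snd (xs ! i))))
                      (\<lambda>h. \<lambda>i\<in>{..<length xs}. h (xs ! i))
              = model_fdd T Pz Kv Ky xs)"
proof (intro exI conjI allI impI)
  have "model_process T Pz Kv Ky \<in> space (prob_algebra (PiM (UNIV \<times> {1..T}) (\<lambda>(x, t). Y t)))"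
    using assms by (intro model_process_in_prob_algebra) auto
  then show "prob_space (model_process T Pz Kv Ky)"
    and "sets (model_process T Pz Kv Ky) = sets (PiM (UNIV \<times> {1..T}) (\<lambda>(x, t). Y t))"
    by (simp_all add: space_prob_algebra)
  fix xs :: "('x \<times> nat) list"
  assume "distinct xs" "set xs \<subseteq> UNIV \<times> {1..T}"
  then show "distr (model_process T Pz Kv Ky) (PiM {..<length xs} (\<lambda>i. Y (snd (xs ! i))))
      (\<lambda>h. \<lambda>i\<in>{..<length xs}. h (xs ! i)) = model_fdd T Pz Kv Ky xs"
    using assms by (intro distr_model_process_nth) auto
qed

end
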